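(* Let $k\ge 2$, let $\sim$ be an equivalence relation on $\{1,\dots,N\}^2$ satisfying condition (C2) with constant $B$, and assume $N\ge B$. Let $\pi$ be a partition of $\{1,\dots,k\}$ with $r$ blocks. Then $$\#\mathcal E^{(N)}_k(\pi)\le N^{r+1}\,B^{\,k-r-1}.$$
   Context: For $N\in\mathbb N$, let $\sim$ be an equivalence relation on $\{1,\dots,N\}^2$. Condition (C2): $\max_{p,q,r}\#\{s\in\{1,\dots,N\}:(p,q)\sim(r,s)\}\le B<\infty$, where $B$ does not depend on $N$. For a partition $\pi$ of $\{1,\dots,k\}$, let $\mathcal E^{(N)}_k(\pi)$ be the set of index sequences $i=(i_1,\dots,i_k)\in\{1,\dots,N\}^k$ such that, with $i_{k+1}:=i_1$, for all $l,m\in\{1,\dots,k\}$: $l$ and $m$ lie in the same block of $\pi$ if and only if $(i_l,i_{l+1})\sim(i_m,i_{m+1})$. (Every index sequence belongs to $\mathcal E^{(N)}_k(\pi)$ for exactly one partition $\pi$.) *)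

theory Defs
  imports "HOL-Analysis.Analysis" "HOL-Library.Disjoint_Sets" "HOL-Library.FuncSet"
begin

text \<open>Cyclic successor on {1..k}: l+1 for l<k, and 1 for l=k (so i_{k+1} := i_1).\<close>
definition cyc_succ :: "nat \<Rightarrow> nat \<Rightarrow> nat" where
  "cyc_succ k l = (if l = k then 1 else l + 1)"

definition cond_C2 :: "nat \<Rightarrow> ((nat \<times> nat) \<times> (nat \<times> nat)) set \<Rightarrow> real \<Rightarrow> bool" where
  "cond_C2 N R B \<longleftrightarrow>
     (\<forall>p\<in>{1..N}. \<forall>q\<in>{1..N}. \<forall>r\<in>{1..N}.
        real (card {s\<in>{1..N}. ((p,q),(r,s)) \<in> R}) \<le> B)"

definition E_set :: "nat \<Rightarrow> ((nat \<times> nat) \<times> (nat \<times> nat)) set \<Rightarrow> nat \<Rightarrow> nat set set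
                      \<Rightarrow> (nat \<Rightarrow> nat) set" where
  "E_set N R k P = {i \<in> {1..k} \<rightarrow>\<^sub>E {1..N}.
     \<forall>l\<in>{1..k}. \<forall>m\<in>{1..k}.
       ((\<exists>b\<in>P. l \<in> b \<and> m \<in> b) \<longleftrightarrow>
        ((i l, i (cyc_succ k l)), (i m, i (cyc_succ k m))) \<in> R)}"

end

theory Submission
  imports Defs
begin

text \<open>Choose \<open>i(1), \<dots>, i(k)\<close> one at a time; there are \<open>N\<close> choices for \<open>i(1)\<close>.
  For \<open>1 \<le> j < k\<close>, if \<open>j\<close> is the least element of its block there are at most \<open>N\<close>
  choices for \<open>i(j+1)\<close>. Otherwise the least element \<open>m < j\<close> of that block forces
  \<open>(i(m), i(m+1)) \<sim> (i(j), i(j+1))\<close>, where only \<open>i(j+1)\<close> is not yet fixed, so (C2) leaves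
  at most \<open>B\<close> choices. Hence \<open>#E \<le> N^(1+s) B^(k-1-s)\<close> with \<open>s \<le> r\<close> the number of
  block minima below \<open>k\<close>, and \<open>1 \<le> B \<le> N\<close> (the lower bound by reflexivity of \<open>\<sim>\<close>) allows
  trading \<open>r - s\<close> factors \<open>B\<close> for factors \<open>N\<close>, even when the exponent \<open>k - r - 1\<close> is \<open>-1\<close>.\<close>

lemma card_restrict_Suc_le:
  fixes F :: "(nat \<Rightarrow> 'a) set" and V :: "(nat \<Rightarrow> 'a) \<Rightarrow> 'a set" and c :: real
  assumes "finite F"
    and next_in: "\<And>f. f \<in> F \<Longrightarrow> f (Suc j) \<in> V (restrict f {1..j})"
    and finite_V: "\<And>f. f \<in> F \<Longrightarrow> finite (V (restrict f {1..j}))"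
    and card_V: "\<And>f. f \<in> F \<Longrightarrow> real (card (V (restrict f {1..j}))) \<le> c"
  shows "real (card ((\<lambda>f. restrict f {1..Suc j}) ` F))
           \<le> real (card ((\<lambda>f. restrict f {1..j}) ` F)) * c"
proof -
  let ?pre = "\<lambda>n. (\<lambda>f. restrict f {1..n}) ` F"
  define split where "split g = (restrict g {1..j}, g (Suc j))" for g :: "nat \<Rightarrow> 'a"
  have "inj_on split (?pre (Suc j))"
    by (auto simp: inj_on_def split_def fun_eq_iff restrict_def le_Suc_eq)
  moreover have "split ` ?pre (Suc j) \<subseteq> Sigma (?pre j) V"
    using next_in by (auto simp: split_def)
  ultimately have "card (?pre (Suc j)) \<le> card (Sigma (?pre j) V)"
    using assms(1) finite_V by (intro card_inj_on_le) auto
  also have "\<dots> = (\<Sum>g\<in>?pre j. card (V g))"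
    using assms(1) finite_V by (intro card_SigmaI) auto
  finally have "real (card (?pre (Suc j))) \<le> (\<Sum>g\<in>?pre j. real (card (V g)))"
    by (metis of_nat_le_iff of_nat_sum)
  also have "\<dots> \<le> (\<Sum>g\<in>?pre j. c)"
    using card_V by (intro sum_mono) auto
  finally show ?thesis by simp
qed

lemma le_prod_of_step_le:
  fixes a c :: "nat \<Rightarrow> real"
  assumes "m \<le> n"
    and "\<And>j. m \<le> j \<Longrightarrow> j < n \<Longrightarrow> a (Suc j) \<le> a j * c j"
    and "\<And>j. m \<le> j \<Longrightarrow> j < n \<Longrightarrow> 0 \<le> c j"
  shows "a n \<le> a m * (\<Prod>j\<in>{m..<n}. c j)"
  using assms
proof (induction n rule: dec_induct)
  case (step n)
  have "a (Suc n) \<le> a n * c n" using step by auto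
  also have "\<dots> \<le> a m * (\<Prod>j\<in>{m..<n}. c j) * c n"
    using step by (intro mult_right_mono) auto
  finally show ?case using step by (simp add: prod.atLeastLessThan_Suc mult.assoc)
qed simp

lemma partition_on_obtain_smaller_in_block:
  fixes P :: "'a::linorder set set"
  assumes "partition_on A P" "finite A" "l \<in> A" "l \<notin> Min ` P"
  obtains m b where "b \<in> P" "m \<in> b" "l \<in> b" "m < l"
proof -
  have "\<Union>P = A" using partition_onD1[OF assms(1)] by simp
  with assms(3) obtain b where b: "b \<in> P" "l \<in> b" by blast
  have "finite b"
    using \<open>\<Union>P = A\<close> b(1) assms(2) by (metis Sup_upper finite_subset)
  with b have "Min b \<in> b" "Min b \<le> l" by (auto intro: Min_in)
  moreover have "Min b \<noteq> l" using b(1) assms(4) by blast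
  ultimately show thesis using b by (intro that[of b "Min b"]) auto
qed

lemma cond_C2_ge_1:
  assumes "refl_on ({1..N} \<times> {1..N}) R" "cond_C2 N R B" "0 < N"
  shows "1 \<le> B"
proof -
  let ?S = "{s\<in>{1..N}. ((1, 1), (1, s)) \<in> R}"
  have "((1, 1), (1, 1)) \<in> R" using assms(3) by (intro refl_onD[OF assms(1)]) auto
  then have "1 \<in> ?S" using assms(3) by simp
  then have "0 < card ?S" by (auto simp: card_gt_0_iff)
  moreover have "real (card ?S) \<le> B" using assms(2,3) by (simp add: cond_C2_def)
  ultimately show ?thesis by linarith
qed

lemma E_set_subset_PiE: "E_set N R k P \<subseteq> {1..k} \<rightarrow>\<^sub>E {1..N}"
  by (auto simp: E_set_def)

lemma E_set_same_block_related:
  assumes "i \<in> E_set N R k P" "b \<in> P" "m \<in> b" "j \<in> b" "m \<in> {1..<k}" "j \<in> {1..<k}"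
  shows "((i m, i (Suc m)), (i j, i (Suc j))) \<in> R"
proof -
  have "((i m, i (cyc_succ k m)), (i j, i (cyc_succ k j))) \<in> R"
    using assms(1-6) unfolding E_set_def by fastforce
  with assms(5,6) show ?thesis by (simp add: cyc_succ_def)
qed

lemma finite_E_set: "finite (E_set N R k P)"
  using E_set_subset_PiE by (rule finite_subset) (simp add: finite_PiE)

lemma E_set_restrict_Suc_le:
  assumes "cond_C2 N R B" "partition_on {1..k} P" "j \<in> {1..<k}"
  shows "real (card ((\<lambda>f. restrict f {1..Suc j}) ` E_set N R k P))
           \<le> real (card ((\<lambda>f. restrict f {1..j}) ` E_set N R k P))
              * (if j \<in> Min ` P then real N else B)"
proof -
  let ?E = "E_set N R k P"
  have range_E: "f l \<in> {1..N}" if "f \<in> ?E" "l \<in> {1..k}" for f l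
    using that E_set_subset_PiE by blast
  show ?thesis
  proof (cases "j \<in> Min ` P")
    case True
    have "real (card ((\<lambda>f. restrict f {1..Suc j}) ` ?E))
            \<le> real (card ((\<lambda>f. restrict f {1..j}) ` ?E)) * real N"
    proof (rule card_restrict_Suc_le[where V = "\<lambda>_. {1..N}"])
      fix f assume "f \<in> ?E"
      then show "f (Suc j) \<in> {1..N}" using range_E assms(3) by simp
    qed (simp_all add: finite_E_set)
    with True show ?thesis by simp
  next
    case False
    have "j \<in> {1..k}" using assms(3) by simp
    then obtain m b where mb: "b \<in> P" "m \<in> b" "j \<in> b" "m < j"
      by (rule partition_on_obtain_smaller_in_block[OF assms(2) finite_atLeastAtMost _ False])
    have "m \<in> {1..k}" using mb(1,2) partition_onD1[OF assms(2)] by blast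
    with mb(4) assms(3) have m: "m \<in> {1..<k}" by simp
    define V where "V g = {s\<in>{1..N}. ((g m, g (Suc m)), (g j, s)) \<in> R}" for g :: "nat \<Rightarrow> nat"
    have "real (card ((\<lambda>f. restrict f {1..Suc j}) ` ?E))
            \<le> real (card ((\<lambda>f. restrict f {1..j}) ` ?E)) * B"
    proof (rule card_restrict_Suc_le[where V = V])
      fix f assume f: "f \<in> ?E"
      have V: "V (restrict f {1..j}) = {s\<in>{1..N}. ((f m, f (Suc m)), (f j, s)) \<in> R}"
        using m mb(4) assms(3) by (simp add: V_def)
      show "f (Suc j) \<in> V (restrict f {1..j})"
        unfolding V using E_set_same_block_related[OF f mb(1-3) m assms(3)] range_E[OF f] assms(3)
        by simp
      have "f m \<in> {1..N}" "f (Suc m) \<in> {1..N}" "f j \<in> {1..N}"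
        using range_E[OF f] m assms(3) by simp_all
      then show "real (card (V (restrict f {1..j}))) \<le> B"
        unfolding V using assms(1) unfolding cond_C2_def by blast
    qed (simp_all add: finite_E_set V_def)
    with False show ?thesis by simp
  qed
qed

lemma card_E_set_le_prod:
  assumes "cond_C2 N R B" "partition_on {1..k} P" "1 \<le> k" "0 \<le> B"
  shows "real (card (E_set N R k P))
           \<le> real N * (\<Prod>l\<in>{1..<k}. if l \<in> Min ` P then real N else B)"
proof -
  let ?E = "E_set N R k P"
  let ?pre = "\<lambda>n. (\<lambda>f. restrict f {1..n}) ` ?E"
  let ?c = "\<lambda>l. if l \<in> Min ` P then real N else B"
  have "restrict f {1..k} = f" if "f \<in> ?E" for f
    using subsetD[OF E_set_subset_PiE that] by (intro extensional_restrict) (simp add: PiE_def)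
  then have "real (card ?E) = real (card (?pre k))" by simp
  also have "\<dots> \<le> real (card (?pre 1)) * prod ?c {1..<k}"
  proof (rule le_prod_of_step_le[where a = "\<lambda>n. real (card (?pre n))"])
    fix j assume "1 \<le> j" "j < k"
    then show "real (card (?pre (Suc j))) \<le> real (card (?pre j)) * ?c j"
      using E_set_restrict_Suc_le[OF assms(1,2)] by simp
  qed (use assms(3,4) in simp_all)
  also have "\<dots> \<le> real N * prod ?c {1..<k}"
  proof (rule mult_right_mono)
    have "?pre 1 \<subseteq> {1..1} \<rightarrow>\<^sub>E {1..N}"
    proof
      fix g assume "g \<in> ?pre 1"
      then obtain f where f: "f \<in> ?E" "g = restrict f {1..1}" by blast
      have "f 1 \<in> {1..N}"
        using assms(3) by (intro PiE_mem[OF subsetD[OF E_set_subset_PiE f(1)]]) simp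
      with f(2) show "g \<in> {1..1} \<rightarrow>\<^sub>E {1..N}" by (simp add: restrict_PiE_iff)
    qed
    then have "card (?pre 1) \<le> card ({1..1::nat} \<rightarrow>\<^sub>E {1..N})"
      by (intro card_mono) (simp_all add: finite_PiE)
    then show "real (card (?pre 1)) \<le> real N" by (simp add: card_PiE)
    show "0 \<le> prod ?c {1..<k}" using assms(4) by (intro prod_nonneg) simp
  qed
  finally show ?thesis .
qed

lemma prod_if_mem_eq_power:
  assumes "finite A"
  shows "(\<Prod>l\<in>A. if l \<in> M then x else y) = x ^ card (A \<inter> M) * y ^ card (A - M)"
  using prod.If_cases[OF assms, of "\<lambda>l. l \<in> M" "\<lambda>_. x" "\<lambda>_. y"]
  by (simp add: Diff_eq)

lemma power_mult_power_le_power_int: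
  fixes x y :: real
  assumes "1 \<le> y" "y \<le> x" "m \<le> r" "m \<le> n"
  shows "x ^ m * y ^ (n - m) \<le> x ^ r * y powi (int n - int r)"
proof -
  have "y ^ (n - m) = y ^ (r - m) * y powi (int n - int r)"
    using assms by (simp add: power_int_of_nat [symmetric] power_int_add [symmetric])
  also have "\<dots> \<le> x ^ (r - m) * y powi (int n - int r)"
    using assms by (intro mult_right_mono power_mono) auto
  finally have "x ^ m * y ^ (n - m) \<le> x ^ m * x ^ (r - m) * y powi (int n - int r)"
    using assms by (simp add: mult.assoc mult_left_mono)
  with assms(3) show ?thesis by (simp add: power_add [symmetric])
qed

theorem mainTheorem4:
  fixes N k :: nat and B :: real
    and R :: "((nat \<times> nat) \<times> (nat \<times> nat)) set"
    and P :: "nat set set"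
  assumes "k \<ge> 2"
    and "equiv ({1..N} \<times> {1..N}) R"
    and "cond_C2 N R B"
    and "real N \<ge> B"
    and "partition_on {1..k} P"
  shows "real (card (E_set N R k P))
           \<le> real N ^ (card P + 1) * B powi (int k - int (card P) - 1)"
proof (cases "N = 0")
  case True
  with assms(1) have "E_set N R k P = {}" by (auto simp: E_set_def PiE_iff)
  with True show ?thesis by simp
next
  case False
  have B: "1 \<le> B" using assms(2,3) False by (intro cond_C2_ge_1) (auto simp: equiv_def)
  define m where "m = card ({1..<k} \<inter> Min ` P)"
  have "finite P" using finite_elements[OF _ assms(5)] by simp
  then have "m \<le> card (Min ` P)" unfolding m_def by (intro card_mono) auto
  also have "\<dots> \<le> card P" by (rule card_image_le) fact
  finally have m_le: "m \<le> card P" "m \<le> k - 1"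
    unfolding m_def using card_mono[of "{1..<k}" "{1..<k} \<inter> Min ` P"] by auto
  have "real (card (E_set N R k P)) \<le> real N * (real N ^ m * B ^ (k - 1 - m))"
    using card_E_set_le_prod[OF assms(3,5)] assms(1) B
    by (simp add: prod_if_mem_eq_power m_def card_Diff_subset_Int Int_commute)
  also have "\<dots> \<le> real N * (real N ^ card P * B powi (int (k - 1) - int (card P)))"
    using B assms(4) m_le by (intro mult_left_mono power_mult_power_le_power_int) auto
  finally show ?thesis using assms(1) by (simp add: of_nat_diff algebra_simps)
qed

end
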